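(* Let $0\le l<N$, let $\lambda\in\mathbf D_N$, and let $\beta=(1,c_2(\lambda)+1,\dots,c_N(\lambda)+1)$ and $\alpha=(c_2(\lambda),\dots,c_N(\lambda),0)$. Then \[ \sum_{P\in\mathbf L_{N,l}(\lambda)}q^{\mathrm{dinv}(P)}x^{\mathrm{wt}_+(P)}=\sum_{\substack{I\subseteq[N-1]\\|I|=l}}q^{h_I(\alpha)}\,N_{\beta/(\alpha+\varepsilon_I)}(X;q). \]
   Context: Dyck paths $\mathbf D_N$: south/east lattice paths from $(0,N)$ to $(N,0)$ weakly below the segment joining them; $\delta$ the staircase path. $r_i(\lambda)$ (resp. $c_i(\lambda)$) is the number of lattice squares above $\lambda$ and below $\delta$ in the $i$-th row numbered north to south (resp. $i$-th column numbered right to left). A labelling $P\in\mathbb N^N$ attaches $P_i$ to the $i$-th south step from the north, strictly increasing from north to south along each vertical run; $\mathbf L_{N,l}(\lambda)$ is the set of labellings with exactly $l$ zeros, none on a south step on the line $x=0$. $\mathrm{dinv}(P)$ counts pairs $i<j$ with $r_i=r_j$ and $P_i<P_j$, or $r_i=r_j+1$ and $P_i>P_j$; $x^{\mathrm{wt}_+(P)}=\prod_{i:P_i\ne0}x_{P_i}$. $\varepsilon_I=\sum_{i\in I}\varepsilon_i$. For a vector $\eta$ of length $n$ and $I\subseteq[n]$: $h_I(\eta)=|\{(r,s):r<s,\ r\in I,\ s\notin I,\ \eta_s=\eta_r+1\}|$. Row shapes: for $\alpha,\beta\in\mathbb Z^n$ with $\alpha_j\le\beta_j$, row $j$ of $\beta/\alpha$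 consists of boxes with $x$-coordinates $\alpha_j+1,\dots,\beta_j$; boxes at $x$-coordinates $\alpha_j$ and $\beta_j+1$ are adjacent to the left/right ends of row $j$. A $w_0$-triple is $(u,v,w)$ with $v$ a box in row $r$, $u,w$ each a box of or adjacent to a row $j>r$, with $x$-coordinates $i_u=i_v$, $i_w=i_v+1$. For a row strict tableau $S:\beta/\alpha\to\mathbb Z_+$ (strictly increasing on rows), a $w_0$-triple is increasing if $S(u)<S(v)<S(w)$, with $S(u)=-\infty$ if $u$ is left-adjacent and $S(w)=+\infty$ if $w$ is right-adjacent; $h_{w_0}(S)$ is the number of increasing triples. $N_{\beta/\alpha}(X;q)=\sum_S q^{h_{w_0}(S)}\prod_{u}x_{S(u)}$ over all such $S$, and $N_{\beta/\alpha}=0$ if some $\alpha_j>\beta_j$. *)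

theory Defs
  imports Main
begin

text \<open>Dyck paths are encoded as step lists: True = south step, False = east step.
  The path starts at (0,N); after a prefix with s south and e east steps it is at (e, N - s).
  It stays weakly below the segment x + y = N iff e \<le> s for every prefix.\<close>

definition dyck_paths :: "nat \<Rightarrow> bool list set" where
  "dyck_paths N = {p. length p = 2 * N \<and> count_list p True = N \<and>
      (\<forall>k \<le> 2 * N. count_list (take k p) False \<le> count_list (take k p) True)}"

definition staircase :: "nat \<Rightarrow> bool list" where
  "staircase N = concat (replicate N [True, False])"

text \<open>Height of the path over column x (the column between x and x+1): the y-coordinate of its
  (x+1)-th east step, i.e. N minus the number of south steps preceded by at most x east steps.\<close>
definition hgt :: "nat \<Rightarrow> bool list \<Rightarrow> nat \<Rightarrow> nat" where
  "hgt N p x = N - card {k. k < length p \<and> p ! k \<and> count_list (take k p) False \<le> x}"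

text \<open>The unit square [x,x+1] x [y,y+1] lies above the path p and below the staircase.\<close>
definition between :: "nat \<Rightarrow> bool list \<Rightarrow> nat \<Rightarrow> nat \<Rightarrow> bool" where
  "between N p x y \<longleftrightarrow> x < N \<and> y < N \<and> hgt N p x \<le> y \<and> y + 1 \<le> hgt N (staircase N) x"

text \<open>r_i: squares in the i-th row from the north (the strip N-i \<le> y \<le> N-i+1), 1 \<le> i \<le> N.\<close>
definition rowr :: "nat \<Rightarrow> bool list \<Rightarrow> nat \<Rightarrow> nat" where
  "rowr N p i = card {x. between N p x (N - i)}"

text \<open>c_j: squares in the j-th column from the right (the strip N-j \<le> x \<le> N-j+1), 1 \<le> j \<le> N.\<close>
definition colc :: "nat \<Rightarrow> bool list \<Rightarrow> nat \<Rightarrow> nat" where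
  "colc N p j = card {y. between N p (N - j) y}"

text \<open>x-coordinate of the i-th south step from the north (1-based): number of east steps before it.\<close>
definition sx :: "bool list \<Rightarrow> nat \<Rightarrow> nat" where
  "sx p i = count_list (take (filter (\<lambda>k. p ! k) [0..<length p] ! (i - 1)) p) False"

text \<open>Labellings P in N^N, stored as functions on indices 1..N (zero elsewhere),
  strictly increasing north to south along each vertical run (south steps i<j with the same
  x-coordinate), with exactly l zeros, and no zero on a south step on the line x = 0.\<close>
definition labellings :: "nat \<Rightarrow> nat \<Rightarrow> bool list \<Rightarrow> (nat \<Rightarrow> nat) set" where
  "labellings N l p = {P. (\<forall>i. (i = 0 \<or> N < i) \<longrightarrow> P i = 0) \<and>
      (\<forall>i j. 1 \<le> i \<and> i < j \<and> j \<le> N \<and> sx p i = sx p j \<longrightarrow> P i < P j) \<and>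
      card {i \<in> {1..N}. P i = 0} = l \<and>
      (\<forall>i \<in> {1..N}. sx p i = 0 \<longrightarrow> P i \<noteq> 0)}"

definition dinv :: "nat \<Rightarrow> bool list \<Rightarrow> (nat \<Rightarrow> nat) \<Rightarrow> nat" where
  "dinv N p P = card {(i, j). 1 \<le> i \<and> i < j \<and> j \<le> N \<and>
      ((rowr N p i = rowr N p j \<and> P i < P j) \<or> (rowr N p i = rowr N p j + 1 \<and> P i > P j))}"

definition wtplus :: "(nat \<Rightarrow> 'a::comm_monoid_mult) \<Rightarrow> nat \<Rightarrow> (nat \<Rightarrow> nat) \<Rightarrow> 'a" where
  "wtplus x N P = (\<Prod>i \<in> {i \<in> {1..N}. P i \<noteq> 0}. x (P i))"

definition hI :: "nat \<Rightarrow> nat set \<Rightarrow> (nat \<Rightarrow> int) \<Rightarrow> nat" where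
  "hI n I eta = card {(r, s). r < s \<and> r \<in> I \<and> r \<in> {1..n} \<and> s \<in> {1..n} \<and> s \<notin> I \<and>
      eta s = eta r + 1}"

definition boxes :: "nat \<Rightarrow> (nat \<Rightarrow> int) \<Rightarrow> (nat \<Rightarrow> int) \<Rightarrow> (nat \<times> int) set" where
  "boxes n beta gamma = {(j, t). 1 \<le> j \<and> j \<le> n \<and> gamma j < t \<and> t \<le> beta j}"

text \<open>Row strict tableaux on beta/gamma with entries in {1..m} (truncation to x_1..x_m),
  stored as functions that vanish off the boxes.\<close>
definition tableaux :: "nat \<Rightarrow> nat \<Rightarrow> (nat \<Rightarrow> int) \<Rightarrow> (nat \<Rightarrow> int) \<Rightarrow> (nat \<times> int \<Rightarrow> nat) set" where
  "tableaux m n beta gamma = {S. (\<forall>b. b \<notin> boxes n beta gamma \<longrightarrow> S b = 0) \<and>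
      (\<forall>b \<in> boxes n beta gamma. 1 \<le> S b \<and> S b \<le> m) \<and>
      (\<forall>j t t'. (j, t) \<in> boxes n beta gamma \<and> (j, t') \<in> boxes n beta gamma \<and> t < t'
          \<longrightarrow> S (j, t) < S (j, t'))}"

text \<open>Increasing w0-triples (u,v,w): v = (r,t) a box, u at (j,t), w at (j,t+1) with j > r,
  u a box of row j or left-adjacent (t = gamma_j, value -infinity),
  w a box of row j or right-adjacent (t = beta_j, value +infinity).\<close>
definition hw0 :: "nat \<Rightarrow> (nat \<Rightarrow> int) \<Rightarrow> (nat \<Rightarrow> int) \<Rightarrow> (nat \<times> int \<Rightarrow> nat) \<Rightarrow> nat" where
  "hw0 n beta gamma S = card {(r, t, j). (r, t) \<in> boxes n beta gamma \<and> r < j \<and> j \<le> n \<and>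
      gamma j \<le> t \<and> t \<le> beta j \<and>
      (t = gamma j \<or> S (j, t) < S (r, t)) \<and>
      (t = beta j \<or> S (r, t) < S (j, t + 1))}"

text \<open>N_{beta/gamma}(x_1,...,x_m; q), i.e. N_{beta/gamma}(X;q) with x_i = 0 for i > m.\<close>
definition Nshape :: "nat \<Rightarrow> nat \<Rightarrow> (nat \<Rightarrow> int) \<Rightarrow> (nat \<Rightarrow> int) \<Rightarrow> 'a::comm_ring_1 \<Rightarrow> (nat \<Rightarrow> 'a) \<Rightarrow> 'a" where
  "Nshape m n beta gamma q x =
     (if \<exists>j \<in> {1..n}. gamma j > beta j then 0
      else (\<Sum>S \<in> tableaux m n beta gamma. q ^ hw0 n beta gamma S * (\<Prod>b \<in> boxes n beta gamma. x (S b))))"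

definition beta_of :: "nat \<Rightarrow> bool list \<Rightarrow> nat \<Rightarrow> int" where
  "beta_of N p j = (if j = 1 then 1 else int (colc N p j) + 1)"

definition alpha_of :: "nat \<Rightarrow> bool list \<Rightarrow> nat \<Rightarrow> int" where
  "alpha_of N p j = (if j < N then int (colc N p (j + 1)) else 0)"

definition epsI :: "nat set \<Rightarrow> nat \<Rightarrow> int" where
  "epsI I j = (if j \<in> I then 1 else 0)"

end

theory Submission
  imports Defs
begin

text \<open>The label of the \<open>i\<close>-th south step, which lies on the line \<open>x = s\<^sub>i\<close>, is moved into
  the box at position \<open>i - s\<^sub>i\<close> of row \<open>N - s\<^sub>i\<close> of \<open>\<beta>/\<alpha>\<close>. A zero label can only sit
  on the northmost step of a vertical run, i.e. in the first box of a row, and the set \<open>I\<close> of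
  rows holding a zero is exactly what \<open>\<epsilon>\<^sub>I\<close> removes. This gives a weight preserving
  bijection between the labellings with zero rows \<open>I\<close> and the row strict tableaux of shape
  \<open>\<beta>/(\<alpha> + \<epsilon>\<^sub>I)\<close>.

  For the statistics, the dinv pairs \<open>(a, b)\<close> are grouped by \<open>b\<close> and then by the column of
  \<open>a\<close>. Column by column they match the increasing \<open>w\<^sub>0\<close>-triples with middle box the box of
  \<open>b\<close> if \<open>P\<^sub>b \<noteq> 0\<close>, and the pairs counted by \<open>h\<^sub>I(\<alpha>)\<close> if \<open>P\<^sub>b = 0\<close>, up to two
  correction terms. These count the up- and down-crossings of the level \<open>b - s\<^sub>b\<close> by the
  column areas, which start at 0 and end below that level, so they cancel.\<close>

lemma card_less_eq_sum_indicator: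
  "card {y. y < (x::nat) \<and> Q y} = (\<Sum>y<x. if Q y then 1 else (0::nat))"
  by (simp add: sum.If_cases Int_def lessThan_def conj_commute)

lemma card_pairs_sum_fst:
  assumes "finite A" "\<And>a b. Q a b \<Longrightarrow> a \<in> A" "\<And>a. a \<in> A \<Longrightarrow> finite {b. Q a b}"
  shows "card {(a, b). Q a b} = (\<Sum>a\<in>A. card {b. Q a b})"
proof -
  have "{(a, b). Q a b} = (SIGMA a:A. {b. Q a b})" using assms(2) by auto
  then show ?thesis using assms(1,3) by simp
qed

lemma card_pairs_sum_snd:
  assumes "finite B" "\<And>a b. Q a b \<Longrightarrow> b \<in> B" "\<And>b. b \<in> B \<Longrightarrow> finite {a. Q a b}"
  shows "card {(a, b). Q a b} = (\<Sum>b\<in>B. card {a. Q a b})"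
proof -
  have "{(a, b). Q a b} = prod.swap ` {(b, a). Q a b}" by auto
  then have "card {(a, b). Q a b} = card {(b, a). Q a b}" by (simp add: card_image)
  also have "\<dots> = (\<Sum>b\<in>B. card {a. Q a b})" by (rule card_pairs_sum_fst) (use assms in auto)
  finally show ?thesis .
qed

lemma card_triples_sum:
  assumes "finite B" "\<And>r t j. Q r t j \<Longrightarrow> (r, t) \<in> B"
    "\<And>r t. (r, t) \<in> B \<Longrightarrow> finite {j. Q r t j}"
  shows "card {(r, t, j). Q r t j} = (\<Sum>(r, t)\<in>B. card {j. Q r t j})"
proof -
  have "{(r, t, j). Q r t j} = (\<lambda>((r, t), j). (r, t, j)) ` {(u, j). Q (fst u) (snd u) j}"
    by force
  then have "card {(r, t, j). Q r t j} = card {(u, j). Q (fst u) (snd u) j}"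
    by (simp add: card_image inj_on_def)
  also have "\<dots> = (\<Sum>u\<in>B. card {j. Q (fst u) (snd u) j})"
    by (rule card_pairs_sum_fst) (use assms in auto)
  finally show ?thesis by (simp add: case_prod_beta')
qed

lemma card_reflect:
  assumes "x \<le> N"
  shows "card {j. N - x < j \<and> j \<le> (N::nat) \<and> Q (N - j)} = card {y. y < x \<and> Q y}"
proof -
  have "{j. N - x < j \<and> j \<le> N \<and> Q (N - j)} = (\<lambda>y. N - y) ` {y. y < x \<and> Q y}"
    using assms by (auto intro!: image_eqI[of _ _ "N - j" for j])
  moreover have "inj_on (\<lambda>y. N - y) {y. y < x \<and> Q y}" using assms by (auto simp: inj_on_def)
  ultimately show ?thesis by (simp add: card_image)
qed

lemma upcrossings_eq_downcrossings:
  fixes f :: "nat \<Rightarrow> nat"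
  assumes "f 0 = 0" "\<And>y. y < x \<Longrightarrow> f y \<le> Suc (f (Suc y))" "1 \<le> T"
  shows "(\<Sum>y<x. if f y < T \<and> T \<le> f (Suc y) then 1 else 0)
       = (\<Sum>y<x. if f y = T \<and> Suc (f (Suc y)) = T then 1 else 0) + (if T \<le> f x then 1 else (0::nat))"
  using assms(2)
proof (induction x)
  case 0
  then show ?case using assms by simp
next
  case (Suc x)
  have step: "f x \<le> Suc (f (Suc x))" using Suc.prems by simp
  have "(if T \<le> f x then 1 else 0) + (if f x < T \<and> T \<le> f (Suc x) then 1 else 0)
     = (if f x = T \<and> Suc (f (Suc x)) = T then 1 else (0::nat)) + (if T \<le> f (Suc x) then 1 else 0)"
    using step by (simp split: if_split; arith)
  then show ?case using Suc by simp
qed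

lemma card_add_eq_by_crossings:
  fixes f :: "nat \<Rightarrow> nat"
  assumes "f 0 = 0" "\<And>y. y < x \<Longrightarrow> f y \<le> Suc (f (Suc y))" "f x < T"
    and local: "\<And>y. y < x \<Longrightarrow>
      (if Q1 y then 1 else 0) + (if Q2 y then 1 else 0)
        + (if f y = T \<and> Suc (f (Suc y)) = T then 1 else 0)
      = (if R y then 1 else 0) + (if f y < T \<and> T \<le> f (Suc y) then 1 else (0::nat))"
  shows "card {y. y < x \<and> Q1 y} + card {y. y < x \<and> Q2 y} = card {y. y < x \<and> R y}"
proof -
  have "(\<Sum>y<x. (if Q1 y then 1 else 0) + (if Q2 y then 1 else 0)
          + (if f y = T \<and> Suc (f (Suc y)) = T then 1 else 0))
      = (\<Sum>y<x. (if R y then 1 else 0) + (if f y < T \<and> T \<le> f (Suc y) then 1 else (0::nat)))"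
    by (rule sum.cong) (use local in auto)
  moreover have "(\<Sum>y<x. if f y < T \<and> T \<le> f (Suc y) then 1 else 0)
      = (\<Sum>y<x. if f y = T \<and> Suc (f (Suc y)) = T then 1 else (0::nat))"
    using upcrossings_eq_downcrossings[of f x T] assms(1-3) by simp
  ultimately show ?thesis by (simp add: card_less_eq_sum_indicator sum.distrib)
qed

text \<open>In the next two lemmas, for a south step \<open>b\<close> with \<open>t = b - s\<^sub>b\<close> and a column
  \<open>y < s\<^sub>b\<close>: \<open>a0, a1\<close> are the areas of the columns \<open>y, y + 1\<close>, \<open>p1, p2\<close> the labels of the
  south steps \<open>t + y, t + y + 1\<close>, \<open>pb = P\<^sub>b\<close>, \<open>z\<close> says whether row \<open>N - y\<close> lies in \<open>I\<close>,
  and \<open>g, B, S1, S2\<close> are \<open>\<alpha> + \<epsilon>\<^sub>I\<close> and \<open>\<beta>\<close> of that row and its entries at positions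
  \<open>t, t + 1\<close>.\<close>

lemma column_count_nonzero_label:
  fixes a0 a1 t pb p1 p2 g B S1 S2 :: nat
  assumes sz: "a0 \<le> Suc a1" and pb: "0 < pb"
    and st: "a0 < t \<Longrightarrow> t \<le> a1 \<Longrightarrow> p1 < p2"
    and z1: "a0 < t \<Longrightarrow> t \<le> Suc a1 \<Longrightarrow> (p1 = 0 \<longleftrightarrow> z \<and> t = Suc a0)"
    and z2: "a0 \<le> t \<Longrightarrow> t \<le> a1 \<Longrightarrow> (p2 = 0 \<longleftrightarrow> z \<and> t = a0)"
    and zn: "z \<Longrightarrow> a0 \<le> a1"
    and g: "g = a0 + (if z then 1 else 0)" and B: "B = Suc a1"
    and S1: "S1 = (if g < t \<and> t \<le> B then p1 else 0)"
    and S2: "S2 = (if g < Suc t \<and> Suc t \<le> B then p2 else 0)"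
  shows "(if a0 < t \<and> t \<le> Suc a1 \<and> p1 < pb then 1 else 0)
       + (if a0 \<le> t \<and> t \<le> a1 \<and> pb < p2 then 1 else 0)
       + (if a0 = t \<and> Suc a1 = t then 1 else 0)
     = (if g \<le> t \<and> t \<le> B \<and> (t = g \<or> S1 < pb) \<and> (t = B \<or> pb < S2) then 1 else 0)
       + (if a0 < t \<and> t \<le> a1 then 1 else (0::nat))"
proof -
  consider (lo) "t < a0" | (top0) "t = a0" "a0 \<le> a1" | (empty) "t = a0" "a0 = Suc a1"
    | (mid) "a0 < t" "t \<le> a1" | (last) "a0 < t" "t = Suc a1" | (hi) "Suc a1 < t"
    using sz by linarith
  then show ?thesis
  proof cases
    case top0
    then show ?thesis using g B S2 z2 by (cases z) simp_all
  next
    case empty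
    then show ?thesis using zn g B by auto
  next
    case mid
    then show ?thesis using z1 z2 st g B S1 S2 pb by (cases "z \<and> t = Suc a0") auto
  next
    case last
    then show ?thesis using z1 g B S1 S2 pb by (cases "z \<and> t = Suc a0") auto
  qed (use g B in simp_all)
qed

lemma column_count_zero_label:
  fixes a0 a1 t p2 :: nat
  assumes sz: "a0 \<le> Suc a1"
    and z2: "a0 \<le> t \<Longrightarrow> t \<le> a1 \<Longrightarrow> (p2 = 0 \<longleftrightarrow> z \<and> t = a0)"
    and zn: "z \<Longrightarrow> a0 \<le> a1"
  shows "(if a0 \<le> t \<and> t \<le> a1 \<and> 0 < p2 then 1 else 0)
       + (if a0 = t \<and> Suc a1 = t then 1 else 0)
     = (if \<not> z \<and> a0 = t then 1 else 0)
       + (if a0 < t \<and> t \<le> a1 then 1 else (0::nat))"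
proof (cases "t = a0")
  case True
  then show ?thesis using z2 zn sz by (cases z) auto
qed (use z2 in auto)

lemma hI_cong: "(\<And>j. j \<in> {1..n} \<Longrightarrow> e j = e' j) \<Longrightarrow> hI n I e = hI n I e'"
  unfolding hI_def by (rule arg_cong[where f = card]) auto

lemma boxes_cong:
  "(\<And>j. j \<in> {1..n} \<Longrightarrow> b j = b' j \<and> g j = g' j) \<Longrightarrow> boxes n b g = boxes n b' g'"
  unfolding boxes_def by auto

lemma Nshape_cong:
  assumes "\<And>j. j \<in> {1..n} \<Longrightarrow> b j = b' j \<and> g j = g' j"
  shows "Nshape m n b g q x = Nshape m n b' g' q x"
proof -
  have B: "boxes n b g = boxes n b' g'" using boxes_cong assms by blast
  have T: "tableaux m n b g = tableaux m n b' g'" unfolding tableaux_def B ..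
  have H: "hw0 n b g S = hw0 n b' g' S" for S
    unfolding hw0_def B by (rule arg_cong[where f = card]) (use assms in \<open>auto simp: boxes_def\<close>)
  have C: "(\<exists>j\<in>{1..n}. g j > b j) = (\<exists>j\<in>{1..n}. g' j > b' j)" using assms by auto
  show ?thesis unfolding Nshape_def B T H C ..
qed

lemma count_list_take_eq_card:
  "count_list (take k p) b = card {k'. k' < k \<and> k' < length p \<and> p ! k' = b}"
proof -
  have "count_list (take k p) b = card {i. i < length (take k p) \<and> b = take k p ! i}"
    by (simp add: count_list_eq_length_filter length_filter_conv_card)
  also have "{i. i < length (take k p) \<and> b = take k p ! i}
      = {k'. k' < k \<and> k' < length p \<and> p ! k' = b}"
    by auto
  finally show ?thesis .
qed

lemma count_list_take_mono: "k \<le> k' \<Longrightarrow> count_list (take k p) b \<le> count_list (take k' p) b"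
  unfolding count_list_take_eq_card by (rule card_mono) auto

definition south_pos :: "bool list \<Rightarrow> nat list" where
  "south_pos p = filter (\<lambda>k. p ! k) [0..<length p]"

lemma sx_eq_count_south_pos: "sx p i = count_list (take (south_pos p ! (i - 1)) p) False"
  by (simp add: sx_def south_pos_def)

lemma south_pos_distinct: "distinct (south_pos p)"
  unfolding south_pos_def by simp

lemma south_pos_set: "set (south_pos p) = {k. k < length p \<and> p ! k}"
  unfolding south_pos_def by auto

lemma south_pos_less: "i < j \<Longrightarrow> j < length (south_pos p) \<Longrightarrow> south_pos p ! i < south_pos p ! j"
  using sorted_wrt_nth_less[OF sorted_wrt_filter[OF sorted_wrt_upt]]
  unfolding south_pos_def by blast

lemma south_pos_less_iff:
  "i < length (south_pos p) \<Longrightarrow> j < length (south_pos p) \<Longrightarrow> south_pos p ! i < south_pos p ! j \<longleftrightarrow> i < j"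
  by (metis linorder_neqE_nat order_less_asym south_pos_less)

lemma length_south_pos: "length (south_pos p) = count_list p True"
proof -
  have "length (south_pos p) = card (set (south_pos p))"
    using south_pos_distinct distinct_card by metis
  also have "\<dots> = count_list (take (length p) p) True"
    using count_list_take_eq_card[of "length p" p True] by (simp add: south_pos_set)
  finally show ?thesis by simp
qed

lemma south_pos_nth: "i < length (south_pos p) \<Longrightarrow> south_pos p ! i < length p \<and> p ! (south_pos p ! i)"
  using south_pos_set nth_mem by blast

lemma count_True_take_south_pos:
  assumes "i < length (south_pos p)"
  shows "count_list (take (south_pos p ! i) p) True = i"
proof -
  let ?ps = "south_pos p"
  have "{k. k < ?ps ! i \<and> k < length p \<and> p ! k} = (!) ?ps ` {..<i}"
  proof
    show "{k. k < ?ps ! i \<and> k < length p \<and> p ! k} \<subseteq> (!) ?ps ` {..<i}"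
    proof
      fix k assume k: "k \<in> {k. k < ?ps ! i \<and> k < length p \<and> p ! k}"
      then have "k \<in> set ?ps" by (simp add: south_pos_set)
      then obtain i' where i': "i' < length ?ps" "?ps ! i' = k" by (auto simp: in_set_conv_nth)
      then show "k \<in> (!) ?ps ` {..<i}" using k south_pos_less_iff[OF i'(1) assms] by auto
    qed
    show "(!) ?ps ` {..<i} \<subseteq> {k. k < ?ps ! i \<and> k < length p \<and> p ! k}"
      using assms south_pos_less south_pos_nth by fastforce
  qed
  moreover have "inj_on ((!) ?ps) {..<i}"
    using assms
    by (intro inj_onI) (metis lessThan_iff nat_neq_iff order.strict_trans south_pos_less)
  ultimately show ?thesis by (simp add: count_list_take_eq_card card_image)
qed

lemma staircase_eq_map_even: "staircase N = map even [0..<2 * N]"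
proof (induction N)
  case 0
  then show ?case by (simp add: staircase_def)
next
  case (Suc N)
  have "staircase (Suc N) = staircase N @ [True, False]"
    unfolding staircase_def by (simp flip: replicate_append_same)
  also have "\<dots> = map even [0..<2 * Suc N]" using Suc by simp
  finally show ?case .
qed

lemma count_False_map_even: "count_list (map even [0..<n]) False = n div 2"
  by (induction n) auto

lemma hgt_staircase: "hgt N (staircase N) x = N - min N (Suc x)"
proof -
  have "{k. k < length (staircase N) \<and> staircase N ! k \<and>
          count_list (take k (staircase N)) False \<le> x}
      = (\<lambda>i. 2 * i) ` {..<min N (Suc x)}"
    by (auto simp: staircase_eq_map_even take_map count_False_map_even elim!: evenE)
  then show ?thesis unfolding hgt_def by (simp add: card_image inj_on_def)
qed

locale dyck_path =
  fixes N :: nat and lam :: "bool list"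
  assumes dyck: "lam \<in> dyck_paths N"
begin

lemma length_lam: "length lam = 2 * N"
  using dyck by (simp add: dyck_paths_def)

lemma length_south_pos_lam: "length (south_pos lam) = N"
  using dyck by (simp add: dyck_paths_def length_south_pos)

lemma sx_less: "1 \<le> i \<Longrightarrow> i \<le> N \<Longrightarrow> sx lam i < i"
proof -
  assume i: "1 \<le> i" "i \<le> N"
  then have il: "i - 1 < length (south_pos lam)" using length_south_pos_lam by simp
  then have "south_pos lam ! (i - 1) \<le> 2 * N" using south_pos_nth length_lam by fastforce
  then have "sx lam i \<le> count_list (take (south_pos lam ! (i - 1)) lam) True"
    using dyck unfolding sx_eq_count_south_pos dyck_paths_def by blast
  then show "sx lam i < i" using count_True_take_south_pos[OF il] i by simp
qed

lemma sx_mono: "1 \<le> i \<Longrightarrow> i \<le> i' \<Longrightarrow> i' \<le> N \<Longrightarrow> sx lam i \<le> sx lam i'"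
proof -
  assume i: "1 \<le> i" "i \<le> i'" "i' \<le> N"
  then have "south_pos lam ! (i - 1) \<le> south_pos lam ! (i' - 1)"
    using south_pos_less[of "i - 1" "i' - 1" lam] length_south_pos_lam
    by (cases "i = i'") (auto intro: less_imp_le)
  then show ?thesis unfolding sx_eq_count_south_pos by (rule count_list_take_mono)
qed

lemma hgt_lam: "hgt N lam x = N - card {i \<in> {1..N}. sx lam i \<le> x}"
proof -
  let ?k = "\<lambda>i. south_pos lam ! (i - 1)"
  have "{k. k < length lam \<and> lam ! k \<and> count_list (take k lam) False \<le> x}
      = ?k ` {i \<in> {1..N}. sx lam i \<le> x}"
  proof
    show "{k. k < length lam \<and> lam ! k \<and> count_list (take k lam) False \<le> x}
        \<subseteq> ?k ` {i \<in> {1..N}. sx lam i \<le> x}"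
    proof
      fix k assume k: "k \<in> {k. k < length lam \<and> lam ! k \<and> count_list (take k lam) False \<le> x}"
      then have "k \<in> set (south_pos lam)" by (simp add: south_pos_set)
      then obtain i where i: "i < N" "south_pos lam ! i = k"
        using length_south_pos_lam by (auto simp: in_set_conv_nth)
      then show "k \<in> ?k ` {i \<in> {1..N}. sx lam i \<le> x}"
        using k by (intro image_eqI[of _ _ "Suc i"]) (auto simp: sx_eq_count_south_pos)
    qed
    show "?k ` {i \<in> {1..N}. sx lam i \<le> x}
        \<subseteq> {k. k < length lam \<and> lam ! k \<and> count_list (take k lam) False \<le> x}"
      using south_pos_nth length_south_pos_lam by (fastforce simp: sx_eq_count_south_pos)
  qed
  moreover have "inj_on ?k {i \<in> {1..N}. sx lam i \<le> x}"
    using nth_eq_iff_index_eq[OF south_pos_distinct] length_south_pos_lam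
    by (intro inj_onI) fastforce
  ultimately show ?thesis unfolding hgt_def by (simp add: card_image)
qed

end

text \<open>\<open>s i\<close> is the x-coordinate of the \<open>i\<close>-th south step, numbered from the north, of a Dyck
  path. The steps on the line \<open>x = y\<close> are those \<open>i\<close> with
  \<open>steps_left y < i \<le> steps_left (y + 1)\<close>, and \<open>col_area (y + 1)\<close> is the number of
  squares between the path and the staircase in the column from \<open>x = y\<close> to \<open>x = y + 1\<close>,
  i.e. \<open>c\<^bsub>N-y\<^esub>\<close>.\<close>

locale dyck_columns =
  fixes N :: nat and s :: "nat \<Rightarrow> nat"
  assumes s_lt: "\<And>i. 1 \<le> i \<Longrightarrow> i \<le> N \<Longrightarrow> s i < i"
    and s_mono: "\<And>i i'. 1 \<le> i \<Longrightarrow> i \<le> i' \<Longrightarrow> i' \<le> N \<Longrightarrow> s i \<le> s i'"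
begin

definition steps_left :: "nat \<Rightarrow> nat" where "steps_left y = card {i \<in> {1..N}. s i < y}"
definition col_area :: "nat \<Rightarrow> nat" where "col_area y = steps_left y - y"

lemma steps_left_le: "steps_left y \<le> N"
proof -
  have "card {i \<in> {1..N}. s i < y} \<le> card {1..N}" by (rule card_mono) auto
  then show ?thesis by (simp add: steps_left_def)
qed

lemma steps_left_ge: "y \<le> N \<Longrightarrow> y \<le> steps_left y"
proof -
  assume y: "y \<le> N"
  have "{1..y} \<subseteq> {i \<in> {1..N}. s i < y}" using y s_lt by fastforce
  then have "card {1..y} \<le> card {i \<in> {1..N}. s i < y}" by (rule card_mono[rotated]) auto
  then show ?thesis by (simp add: steps_left_def)
qed

lemma steps_left_mono: "y \<le> y' \<Longrightarrow> steps_left y \<le> steps_left y'"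
  unfolding steps_left_def by (rule card_mono) auto

lemma steps_left_0: "steps_left 0 = 0" by (simp add: steps_left_def)

lemma steps_left_N: "steps_left N = N" using steps_left_le[of N] steps_left_ge[of N] by simp

lemma s_less_iff:
  assumes "1 \<le> i" "i \<le> N"
  shows "s i < y \<longleftrightarrow> i \<le> steps_left y"
proof
  assume si: "s i < y"
  have "{1..i} \<subseteq> {i \<in> {1..N}. s i < y}"
  proof
    fix k assume "k \<in> {1..i}"
    then show "k \<in> {i \<in> {1..N}. s i < y}" using s_mono[of k i] si assms by auto
  qed
  then have "card {1..i} \<le> card {i \<in> {1..N}. s i < y}" by (rule card_mono[rotated]) auto
  then show "i \<le> steps_left y" by (simp add: steps_left_def)
next
  assume il: "i \<le> steps_left y"
  show "s i < y"
  proof (rule ccontr)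
    assume "\<not> s i < y"
    then have "{i \<in> {1..N}. s i < y} \<subseteq> {1..i - 1}"
    proof (intro subsetI)
      fix k assume nk: "\<not> s i < y" and k: "k \<in> {i \<in> {1..N}. s i < y}"
      have "k < i"
      proof (rule ccontr)
        assume "\<not> k < i"
        then have "s i \<le> s k" using s_mono[of i k] assms k by auto
        then show False using nk k by auto
      qed
      then show "k \<in> {1..i - 1}" using k by auto
    qed
    then have "card {i \<in> {1..N}. s i < y} \<le> card {1..i - 1}" by (rule card_mono[rotated]) auto
    then show False using il assms by (simp add: steps_left_def)
  qed
qed

lemma s_eq_iff:
  assumes "1 \<le> i" "i \<le> N"
  shows "s i = y \<longleftrightarrow> steps_left y < i \<and> i \<le> steps_left (Suc y)"
  using s_less_iff[OF assms, of y] s_less_iff[OF assms, of "Suc y"] by auto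

lemma column_member:
  assumes "steps_left y < i" "i \<le> steps_left (Suc y)"
  shows "1 \<le> i" "i \<le> N" "s i = y"
proof -
  show "1 \<le> i" using assms by simp
  show "i \<le> N" using assms steps_left_le[of "Suc y"] by simp
  then show "s i = y" using s_eq_iff assms by auto
qed

lemma s_less_N: "1 \<le> i \<Longrightarrow> i \<le> N \<Longrightarrow> s i < N"
  using s_lt by fastforce

lemma col_area_add: "y \<le> N \<Longrightarrow> col_area y + y = steps_left y"
  using steps_left_ge[of y] by (simp add: col_area_def)

lemma steps_left_col_area:
  "y < N \<Longrightarrow> steps_left y = col_area y + y \<and> steps_left (Suc y) = Suc (col_area (Suc y) + y)"
  using col_area_add[of y] col_area_add[of "Suc y"] by auto

lemma col_area_step: "y < N \<Longrightarrow> col_area y \<le> Suc (col_area (Suc y))"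
  using steps_left_col_area[of y] steps_left_mono[of y "Suc y"] by simp

lemma col_area_0: "col_area 0 = 0"
  by (simp add: col_area_def steps_left_0)

text \<open>\<open>alpha j = c\<^bsub>j+1\<^esub>\<close> and \<open>beta j = c\<^sub>j + 1\<close>, where \<open>c\<^sub>1 = 0\<close>.\<close>

definition alpha :: "nat \<Rightarrow> int" where "alpha j = int (col_area (N - j))"
definition beta :: "nat \<Rightarrow> int" where "beta j = int (col_area (Suc N - j)) + 1"
definition box :: "nat \<Rightarrow> nat \<times> int" where "box i = (N - s i, int i - int (s i))"

lemma box_in_boxes:
  assumes "1 \<le> i" "i \<le> N"
  shows "box i \<in> boxes N beta alpha"
proof -
  have y: "s i < N" using s_less_N assms .
  then have "N - (N - s i) = s i" "Suc N - (N - s i) = Suc (s i)" by auto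
  then show ?thesis
    using s_eq_iff[OF assms, of "s i"] steps_left_col_area[OF y] y
    unfolding boxes_def box_def alpha_def beta_def by auto
qed

lemma boxes_alpha_obtain:
  assumes "b \<in> boxes N beta alpha"
  obtains i where "1 \<le> i" "i \<le> N" "b = box i"
proof -
  obtain j t where b: "b = (j, t)" by (cases b)
  let ?y = "N - j"
  have j: "1 \<le> j" "j \<le> N" and t: "int (col_area ?y) < t" "t \<le> int (col_area (Suc ?y)) + 1"
    using assms unfolding b boxes_def alpha_def beta_def by (auto simp: Suc_diff_le)
  then obtain n where n: "t = int n"
    by (metis le_less nonneg_int_cases of_nat_0_le_iff order.strict_trans1)
  then have "steps_left ?y < n + ?y" "n + ?y \<le> steps_left (Suc ?y)"
    using t steps_left_col_area[of ?y] j by auto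
  note i = column_member[OF this]
  moreover have "b = box (n + ?y)" using i n j unfolding b box_def by auto
  ultimately show ?thesis using that by blast
qed

lemma inj_on_box: "inj_on box {1..N}"
proof (rule inj_onI)
  fix i i' assume "i \<in> {1..N}" "i' \<in> {1..N}" and e: "box i = box i'"
  then have "s i < N" "s i' < N" using s_less_N by auto
  then have "s i = s i'" using e unfolding box_def by auto
  then show "i = i'" using e unfolding box_def by auto
qed

lemma boxes_alpha_eq: "boxes N beta alpha = box ` {1..N}"
  using box_in_boxes boxes_alpha_obtain by (fastforce elim!: boxes_alpha_obtain)

definition row_area :: "nat \<Rightarrow> nat" where "row_area i = i - 1 - s i"

definition path_dinv :: "(nat \<Rightarrow> nat) \<Rightarrow> nat" where
  "path_dinv P = card {(i, j). 1 \<le> i \<and> i < j \<and> j \<le> N \<and>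
      ((row_area i = row_area j \<and> P i < P j) \<or> (row_area i = row_area j + 1 \<and> P i > P j))}"

definition labellings_bounded :: "nat \<Rightarrow> nat \<Rightarrow> (nat \<Rightarrow> nat) set" where
  "labellings_bounded l m = {P. (\<forall>i. (i = 0 \<or> N < i) \<longrightarrow> P i = 0) \<and>
      (\<forall>i j. 1 \<le> i \<and> i < j \<and> j \<le> N \<and> s i = s j \<longrightarrow> P i < P j) \<and>
      card {i \<in> {1..N}. P i = 0} = l \<and>
      (\<forall>i \<in> {1..N}. s i = 0 \<longrightarrow> P i \<noteq> 0) \<and> (\<forall>i. P i \<le> m)}"

definition zero_rows :: "(nat \<Rightarrow> nat) \<Rightarrow> nat set" where
  "zero_rows P = (\<lambda>i. N - s i) ` {i \<in> {1..N}. P i = 0}"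

definition gamma :: "nat set \<Rightarrow> nat \<Rightarrow> int" where "gamma I j = alpha j + epsI I j"

lemma labellings_boundedD:
  assumes "P \<in> labellings_bounded l m"
  shows "\<And>i. (i = 0 \<or> N < i) \<Longrightarrow> P i = 0"
    and "\<And>i j. 1 \<le> i \<Longrightarrow> i < j \<Longrightarrow> j \<le> N \<Longrightarrow> s i = s j \<Longrightarrow> P i < P j"
    and "card {i \<in> {1..N}. P i = 0} = l"
    and "\<And>i. 1 \<le> i \<Longrightarrow> i \<le> N \<Longrightarrow> s i = 0 \<Longrightarrow> P i \<noteq> 0"
    and "\<And>i. P i \<le> m"
  using assms unfolding labellings_bounded_def by auto

lemma zero_label_top:
  assumes P: "P \<in> labellings_bounded l m" and i: "1 \<le> i" "i \<le> N" and z: "P i = 0"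
  shows "i = Suc (steps_left (s i))"
proof (rule ccontr)
  assume "i \<noteq> Suc (steps_left (s i))"
  moreover have "steps_left (s i) < i" "i \<le> steps_left (Suc (s i))" using s_eq_iff[OF i] by auto
  ultimately have "steps_left (s i) < i - 1" "i - 1 \<le> steps_left (Suc (s i))" by auto
  note prev = column_member[OF this]
  have "P (i - 1) < P i" using labellings_boundedD(2)[OF P, of "i - 1" i] prev i by auto
  then show False using z by simp
qed

lemma inj_on_row_column_tops: "inj_on (\<lambda>i. N - s i) {i \<in> {1..N}. i = Suc (steps_left (s i))}"
proof (rule inj_onI)
  fix i i' assume i: "i \<in> {i \<in> {1..N}. i = Suc (steps_left (s i))}"
    and i': "i' \<in> {i \<in> {1..N}. i = Suc (steps_left (s i))}" and e: "N - s i = N - s i'"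
  have "s i < N" "s i' < N" using s_less_N i i' by auto
  then have "s i = s i'" using e by auto
  then show "i = i'" using i i' by auto
qed

lemma inj_on_zero_row:
  assumes P: "P \<in> labellings_bounded l m"
  shows "inj_on (\<lambda>i. N - s i) {i \<in> {1..N}. P i = 0}"
  by (rule inj_on_subset[OF inj_on_row_column_tops]) (use zero_label_top[OF P] in auto)

lemma zero_rows_iff:
  assumes P: "P \<in> labellings_bounded l m" and y: "y < N"
  shows "N - y \<in> zero_rows P \<longleftrightarrow> steps_left y < steps_left (Suc y) \<and> P (Suc (steps_left y)) = 0"
proof
  assume "N - y \<in> zero_rows P"
  then obtain i where i: "1 \<le> i" "i \<le> N" "P i = 0" "N - y = N - s i" unfolding zero_rows_def by auto
  have "s i < N" using s_less_N i by auto
  then have si: "s i = y" using i y by auto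
  have "i = Suc (steps_left y)" using zero_label_top[OF P i(1,2,3)] si by simp
  then show "steps_left y < steps_left (Suc y) \<and> P (Suc (steps_left y)) = 0"
    using s_eq_iff[OF i(1,2)] si i by auto
next
  assume a: "steps_left y < steps_left (Suc y) \<and> P (Suc (steps_left y)) = 0"
  then have "steps_left y < Suc (steps_left y)" "Suc (steps_left y) \<le> steps_left (Suc y)" by auto
  note top = column_member[OF this]
  then show "N - y \<in> zero_rows P"
    using a unfolding zero_rows_def by (intro image_eqI[of _ _ "Suc (steps_left y)"]) auto
qed

lemma zero_label_iff:
  assumes P: "P \<in> labellings_bounded l m" and c: "steps_left y < a" "a \<le> steps_left (Suc y)"
  shows "P a = 0 \<longleftrightarrow> N - y \<in> zero_rows P \<and> a = Suc (steps_left y)"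
proof -
  note a = column_member[OF c]
  have y: "y < N" using s_less_N a by auto
  show ?thesis
  proof
    assume z: "P a = 0"
    then have "a = Suc (steps_left y)" using zero_label_top[OF P a(1,2) z] a by simp
    then show "N - y \<in> zero_rows P \<and> a = Suc (steps_left y)" using zero_rows_iff[OF P y] z c by auto
  next
    assume "N - y \<in> zero_rows P \<and> a = Suc (steps_left y)"
    then show "P a = 0" using zero_rows_iff[OF P y] by auto
  qed
qed

lemma zero_rows_subset:
  assumes P: "P \<in> labellings_bounded l m"
  shows "zero_rows P \<subseteq> {1..N - 1}"
proof
  fix j assume "j \<in> zero_rows P"
  then obtain i where i: "1 \<le> i" "i \<le> N" "P i = 0" "j = N - s i" unfolding zero_rows_def by auto
  have "s i \<noteq> 0" using labellings_boundedD(4)[OF P i(1,2)] i(3) by auto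
  moreover have "s i < N" using s_less_N i by auto
  ultimately show "j \<in> {1..N - 1}" using i by auto
qed

lemma card_zero_rows:
  assumes P: "P \<in> labellings_bounded l m"
  shows "card (zero_rows P) = l"
  unfolding zero_rows_def using card_image[OF inj_on_zero_row[OF P]] labellings_boundedD(3)[OF P]
  by simp

lemma gamma_zero_rows_le_beta:
  assumes P: "P \<in> labellings_bounded l m" and j: "1 \<le> j" "j \<le> N"
  shows "gamma (zero_rows P) j \<le> beta j"
proof -
  define y where "y = N - j"
  have y: "y < N" and jy: "j = N - y" using j unfolding y_def by auto
  have "j \<in> zero_rows P \<Longrightarrow> col_area y \<le> col_area (Suc y)"
    using zero_rows_iff[OF P y] steps_left_col_area[OF y] jy by auto
  then show ?thesis
    using col_area_step[OF y] y unfolding jy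
    by (auto simp: gamma_def alpha_def beta_def epsI_def Suc_diff_le)
qed

lemma boxes_gamma_iff:
  "(j, t) \<in> boxes N beta (gamma I) \<longleftrightarrow>
     (j, t) \<in> boxes N beta alpha \<and> \<not> (j \<in> I \<and> t = alpha j + 1)"
  unfolding boxes_def gamma_def epsI_def by auto

lemma boxes_gamma_subset: "b \<in> boxes N beta (gamma I) \<Longrightarrow> b \<in> boxes N beta alpha"
  using boxes_gamma_iff by (cases b) auto

lemma box_in_boxes_gamma_iff:
  assumes i: "1 \<le> i" "i \<le> N"
  shows "box i \<in> boxes N beta (gamma I) \<longleftrightarrow> \<not> (N - s i \<in> I \<and> i = Suc (steps_left (s i)))"
proof -
  have "s i < N" using s_less_N i by auto
  then have "int i - int (s i) = alpha (N - s i) + 1 \<longleftrightarrow> i = Suc (steps_left (s i))"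
    using col_area_add[of "s i"] by (auto simp: alpha_def)
  then show ?thesis using boxes_gamma_iff box_in_boxes[OF i] unfolding box_def by auto
qed

lemma box_in_boxes_zero_rows_iff:
  assumes P: "P \<in> labellings_bounded l m" and i: "1 \<le> i" "i \<le> N"
  shows "box i \<in> boxes N beta (gamma (zero_rows P)) \<longleftrightarrow> P i \<noteq> 0"
proof -
  have "steps_left (s i) < i" "i \<le> steps_left (Suc (s i))" using s_eq_iff[OF i] by auto
  then show ?thesis using box_in_boxes_gamma_iff[OF i] zero_label_iff[OF P] by auto
qed

lemma bij_betw_box_nonzero:
  assumes P: "P \<in> labellings_bounded l m"
  shows "bij_betw box {i \<in> {1..N}. P i \<noteq> 0} (boxes N beta (gamma (zero_rows P)))"
proof (rule bij_betw_imageI)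
  show "inj_on box {i \<in> {1..N}. P i \<noteq> 0}" using inj_on_box by (rule inj_on_subset) auto
  show "box ` {i \<in> {1..N}. P i \<noteq> 0} = boxes N beta (gamma (zero_rows P))"
  proof
    show "box ` {i \<in> {1..N}. P i \<noteq> 0} \<subseteq> boxes N beta (gamma (zero_rows P))"
      using box_in_boxes_zero_rows_iff[OF P] by auto
    show "boxes N beta (gamma (zero_rows P)) \<subseteq> box ` {i \<in> {1..N}. P i \<noteq> 0}"
    proof
      fix b assume b: "b \<in> boxes N beta (gamma (zero_rows P))"
      obtain i where i: "1 \<le> i" "i \<le> N" "b = box i"
        using boxes_alpha_obtain boxes_gamma_subset[OF b] by metis
      then show "b \<in> box ` {i \<in> {1..N}. P i \<noteq> 0}"
        using box_in_boxes_zero_rows_iff[OF P i(1,2)] b by auto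
    qed
  qed
qed

definition tableau_of :: "nat set \<Rightarrow> (nat \<Rightarrow> nat) \<Rightarrow> nat \<times> int \<Rightarrow> nat" where
  "tableau_of I P = (\<lambda>(j, t). if (j, t) \<in> boxes N beta (gamma I) then P (nat t + (N - j)) else 0)"

definition labelling_of :: "(nat \<times> int \<Rightarrow> nat) \<Rightarrow> nat \<Rightarrow> nat" where
  "labelling_of S = (\<lambda>i. if 1 \<le> i \<and> i \<le> N then S (box i) else 0)"

lemma tableau_of_box:
  "1 \<le> i \<Longrightarrow> i \<le> N \<Longrightarrow> tableau_of I P (box i) = (if box i \<in> boxes N beta (gamma I) then P i else 0)"
  using s_lt[of i] s_less_N[of i] unfolding tableau_of_def box_def by (auto simp flip: of_nat_diff)

lemma tableauxD:
  assumes "S \<in> tableaux m N beta (gamma I)"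
  shows "\<And>b. b \<notin> boxes N beta (gamma I) \<Longrightarrow> S b = 0"
    and "\<And>b. b \<in> boxes N beta (gamma I) \<Longrightarrow> 1 \<le> S b \<and> S b \<le> m"
    and "\<And>j t t'. (j, t) \<in> boxes N beta (gamma I) \<Longrightarrow> (j, t') \<in> boxes N beta (gamma I) \<Longrightarrow>
           t < t' \<Longrightarrow> S (j, t) < S (j, t')"
  using assms unfolding tableaux_def by auto

lemma tableau_of_in_tableaux:
  assumes P: "P \<in> labellings_bounded l m"
  shows "tableau_of (zero_rows P) P \<in> tableaux m N beta (gamma (zero_rows P))"
proof -
  let ?I = "zero_rows P"
  have range: "1 \<le> tableau_of ?I P b \<and> tableau_of ?I P b \<le> m"
    if b: "b \<in> boxes N beta (gamma ?I)" for b
  proof -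
    obtain i where i: "1 \<le> i" "i \<le> N" "b = box i"
      using boxes_alpha_obtain boxes_gamma_subset[OF b] by metis
    then have "P i \<noteq> 0" using box_in_boxes_zero_rows_iff[OF P i(1,2)] b by simp
    then show ?thesis using tableau_of_box[OF i(1,2)] b i labellings_boundedD(5)[OF P] by auto
  qed
  have strict: "tableau_of ?I P (j, t) < tableau_of ?I P (j, t')"
    if b: "(j, t) \<in> boxes N beta (gamma ?I)" "(j, t') \<in> boxes N beta (gamma ?I)" "t < t'" for j t t'
  proof -
    obtain i where i: "1 \<le> i" "i \<le> N" "(j, t) = box i"
      using boxes_alpha_obtain boxes_gamma_subset[OF b(1)] by metis
    obtain i' where i': "1 \<le> i'" "i' \<le> N" "(j, t') = box i'"
      using boxes_alpha_obtain boxes_gamma_subset[OF b(2)] by metis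
    have "s i < N" "s i' < N" using s_less_N i i' by auto
    then have ss: "s i = s i'" using i i' unfolding box_def by auto
    have "i < i'" using i i' b(3) ss unfolding box_def by auto
    then have "P i < P i'" using labellings_boundedD(2)[OF P i(1) _ i'(2) ss] by auto
    then show ?thesis using tableau_of_box[OF i(1,2)] tableau_of_box[OF i'(1,2)] i i' b by auto
  qed
  show ?thesis unfolding tableaux_def using range strict by (auto simp: tableau_of_def)
qed

lemma labelling_of_tableau_of:
  assumes P: "P \<in> labellings_bounded l m"
  shows "labelling_of (tableau_of (zero_rows P) P) = P"
proof
  fix i
  show "labelling_of (tableau_of (zero_rows P) P) i = P i"
  proof (cases "1 \<le> i \<and> i \<le> N")
    case True
    then show ?thesis
      using tableau_of_box[of i] box_in_boxes_zero_rows_iff[OF P, of i]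
      unfolding labelling_of_def by auto
  qed (use labellings_boundedD(1)[OF P, of i] in \<open>auto simp: labelling_of_def\<close>)
qed

lemma tableau_of_labelling_of:
  assumes S: "S \<in> tableaux m N beta (gamma I)"
  shows "tableau_of I (labelling_of S) = S"
proof
  fix b
  show "tableau_of I (labelling_of S) b = S b"
  proof (cases "b \<in> boxes N beta (gamma I)")
    case True
    obtain i where i: "1 \<le> i" "i \<le> N" "b = box i"
      using boxes_alpha_obtain boxes_gamma_subset[OF True] by metis
    show ?thesis using tableau_of_box[OF i(1,2)] True i unfolding labelling_of_def by auto
  next
    case False
    then show ?thesis using tableauxD(1)[OF S False] unfolding tableau_of_def by (cases b) auto
  qed
qed

lemma labelling_of_eq_0_iff:
  assumes S: "S \<in> tableaux m N beta (gamma I)" and i: "1 \<le> i" "i \<le> N"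
  shows "labelling_of S i = 0 \<longleftrightarrow> N - s i \<in> I \<and> i = Suc (steps_left (s i))"
proof -
  have "labelling_of S i = 0 \<longleftrightarrow> box i \<notin> boxes N beta (gamma I)"
    using tableauxD(1,2)[OF S, of "box i"] i unfolding labelling_of_def by auto
  then show ?thesis using box_in_boxes_gamma_iff[OF i] by simp
qed

lemma zero_rows_labelling_of:
  assumes S: "S \<in> tableaux m N beta (gamma I)" and I: "I \<subseteq> {1..N - 1}"
    and valid: "\<And>j. j \<in> I \<Longrightarrow> gamma I j \<le> beta j"
  shows "zero_rows (labelling_of S) = I"
proof
  show "zero_rows (labelling_of S) \<subseteq> I"
    using labelling_of_eq_0_iff[OF S] unfolding zero_rows_def by auto
  show "I \<subseteq> zero_rows (labelling_of S)"
  proof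
    fix j assume j: "j \<in> I"
    let ?y = "N - j"
    have "1 \<le> j" "j \<le> N - 1" using j I by auto
    then have y: "?y < N" and jy: "N - ?y = j" by auto
    have "col_area ?y \<le> col_area (Suc ?y)"
      using valid[OF j] j jy y by (simp add: gamma_def alpha_def beta_def epsI_def Suc_diff_le)
    then have "steps_left ?y < Suc (steps_left ?y)" "Suc (steps_left ?y) \<le> steps_left (Suc ?y)"
      using steps_left_col_area[OF y] by auto
    note top = column_member[OF this]
    then have "labelling_of S (Suc (steps_left ?y)) = 0"
      using labelling_of_eq_0_iff[OF S] jy j by auto
    then show "j \<in> zero_rows (labelling_of S)"
      using top jy unfolding zero_rows_def by (intro image_eqI[of _ _ "Suc (steps_left ?y)"]) auto
  qed
qed

lemma labelling_of_in_labellings: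
  assumes S: "S \<in> tableaux m N beta (gamma I)" and I: "I \<subseteq> {1..N - 1}" "card I = l"
    and valid: "\<And>j. j \<in> I \<Longrightarrow> gamma I j \<le> beta j"
  shows "labelling_of S \<in> labellings_bounded l m"
proof -
  let ?P = "labelling_of S"
  note zero = labelling_of_eq_0_iff[OF S]
  have strict: "?P i < ?P i'" if ii: "1 \<le> i" "i < i'" "i' \<le> N" "s i = s i'" for i i'
  proof -
    have "steps_left (s i) < i" using s_eq_iff[of i] ii by auto
    then have nz': "?P i' \<noteq> 0" using zero[of i'] ii by auto
    show ?thesis
    proof (cases "?P i = 0")
      case False
      then have "box i \<in> boxes N beta (gamma I)" "box i' \<in> boxes N beta (gamma I)"
        using nz' tableauxD(1)[OF S, of "box i"] tableauxD(1)[OF S, of "box i'"] ii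
        unfolding labelling_of_def by (auto split: if_splits)
      then show ?thesis
        using tableauxD(3)[OF S, of "N - s i" "int i - int (s i)" "int i' - int (s i)"] ii
        unfolding labelling_of_def box_def by auto
    qed (use nz' in simp)
  qed
  have "card {i \<in> {1..N}. ?P i = 0} = card (zero_rows ?P)"
    unfolding zero_rows_def
    by (rule card_image[symmetric], rule inj_on_subset[OF inj_on_row_column_tops])
      (use zero in auto)
  then have card: "card {i \<in> {1..N}. ?P i = 0} = l"
    using zero_rows_labelling_of[OF S I(1) valid] I(2) by simp
  have bounded: "?P i \<le> m" for i
    using tableauxD(1,2)[OF S, of "box i"] unfolding labelling_of_def
    by (cases "box i \<in> boxes N beta (gamma I)") auto
  have "?P i \<noteq> 0" if "1 \<le> i" "i \<le> N" "s i = 0" for i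
    using zero[OF that(1,2)] that I by auto
  then show ?thesis
    unfolding labellings_bounded_def using strict card bounded by (auto simp: labelling_of_def)
qed

lemma prod_tableau_of_eq_wtplus:
  assumes P: "P \<in> labellings_bounded l m"
  shows "(\<Prod>b \<in> boxes N beta (gamma (zero_rows P)). x (tableau_of (zero_rows P) P b)) = wtplus x N P"
proof -
  have "(\<Prod>b \<in> boxes N beta (gamma (zero_rows P)). x (tableau_of (zero_rows P) P b))
      = (\<Prod>i \<in> {i \<in> {1..N}. P i \<noteq> 0}. x (tableau_of (zero_rows P) P (box i)))"
    by (rule prod.reindex_bij_betw[OF bij_betw_box_nonzero[OF P], symmetric])
  also have "\<dots> = (\<Prod>i \<in> {i \<in> {1..N}. P i \<noteq> 0}. x (P i))"
    by (rule prod.cong) (use tableau_of_box box_in_boxes_zero_rows_iff[OF P] in auto)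
  finally show ?thesis unfolding wtplus_def .
qed

definition dinv_partners :: "(nat \<Rightarrow> nat) \<Rightarrow> nat \<Rightarrow> nat set" where
  "dinv_partners P b = {a. 1 \<le> a \<and> a < b \<and>
      ((row_area a = row_area b \<and> P a < P b) \<or> (row_area a = row_area b + 1 \<and> P a > P b))}"

lemma path_dinv_eq_sum: "path_dinv P = (\<Sum>b\<in>{1..N}. card (dinv_partners P b))"
proof -
  have "path_dinv P = (\<Sum>b\<in>{1..N}. card {a. 1 \<le> a \<and> a < b \<and> b \<le> N \<and>
      ((row_area a = row_area b \<and> P a < P b) \<or> (row_area a = row_area b + 1 \<and> P a > P b))})"
    unfolding path_dinv_def by (rule card_pairs_sum_snd) auto
  also have "\<dots> = (\<Sum>b\<in>{1..N}. card (dinv_partners P b))"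
    unfolding dinv_partners_def by (rule sum.cong) auto
  finally show ?thesis .
qed

lemma card_row_partners:
  assumes b: "1 \<le> b" "b \<le> N" and d: "d \<le> 1"
  defines "t \<equiv> b - s b + d"
  shows "card {a. 1 \<le> a \<and> a < b \<and> row_area a = row_area b + d \<and> R a}
       = card {y. y < s b \<and> col_area y < t \<and> t \<le> Suc (col_area (Suc y)) \<and> R (t + y)}"
    (is "card ?A = card ?Y")
proof -
  have sb: "s b < b" "s b < N" using s_lt s_less_N b by auto
  have column: "1 \<le> a \<and> a \<le> N \<and> s a = y \<longleftrightarrow> col_area y + y < a \<and> a \<le> Suc (col_area (Suc y) + y)"
    if "y < N" for a y
    using s_eq_iff[of a y] column_member[of y a] steps_left_col_area[OF that] by auto
  have "?A = (\<lambda>y. t + y) ` ?Y"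
  proof
    show "?A \<subseteq> (\<lambda>y. t + y) ` ?Y"
    proof
      fix a assume a: "a \<in> ?A"
      then have a1: "1 \<le> a" "a \<le> N" using b by auto
      have "s a < a" "s a < N" using s_lt s_less_N a1 by auto
      moreover have "s a \<le> s b" using s_mono[of a b] a b by auto
      ultimately have "s a < s b" "a = t + s a"
        using a sb unfolding row_area_def t_def by (auto simp: le_less)
      then show "a \<in> (\<lambda>y. t + y) ` ?Y"
        using column[of "s a" a] a1 a \<open>s a < N\<close> by (intro image_eqI[of _ _ "s a"]) auto
    qed
    show "(\<lambda>y. t + y) ` ?Y \<subseteq> ?A"
    proof
      fix a assume "a \<in> (\<lambda>y. t + y) ` ?Y"
      then obtain y where y: "y \<in> ?Y" and a: "a = t + y" by auto
      have "y < N" using y sb by auto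
      then have c: "1 \<le> a" "a \<le> N" "s a = y" using column[of y a] y a by auto
      have "a \<le> b" using a y sb d unfolding t_def by auto
      moreover have "a \<noteq> b" using c y by auto
      moreover have "row_area a = row_area b + d" using c a sb unfolding row_area_def t_def by auto
      ultimately show "a \<in> ?A" using c y a by auto
    qed
  qed
  then show ?thesis by (simp add: card_image inj_on_def)
qed

lemma card_dinv_partners:
  assumes b: "1 \<le> b" "b \<le> N"
  defines "t \<equiv> b - s b"
  shows "card (dinv_partners P b)
       = card {y. y < s b \<and> col_area y < t \<and> t \<le> Suc (col_area (Suc y)) \<and> P (t + y) < P b}
       + card {y. y < s b \<and> col_area y \<le> t \<and> t \<le> col_area (Suc y) \<and> P b < P (Suc (t + y))}"
proof -
  let ?D = "\<lambda>d R. {a. 1 \<le> a \<and> a < b \<and> row_area a = row_area b + d \<and> R a}"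
  have "dinv_partners P b = ?D 0 (\<lambda>a. P a < P b) \<union> ?D 1 (\<lambda>a. P b < P a)"
    unfolding dinv_partners_def by auto
  moreover have "finite (?D d R)" for d R by (rule finite_subset[of _ "{..<b}"]) auto
  ultimately have "card (dinv_partners P b)
      = card (?D 0 (\<lambda>a. P a < P b)) + card (?D 1 (\<lambda>a. P b < P a))"
    by (simp add: card_Un_disjoint disjoint_iff)
  then show ?thesis
    using card_row_partners[OF b, of 0 "\<lambda>a. P a < P b"]
      card_row_partners[OF b, of 1 "\<lambda>a. P b < P a"]
    unfolding t_def by (simp add: less_Suc_eq_le)
qed

text \<open>The \<open>w\<^sub>0\<close>-triple with middle box \<open>box b\<close> and outer cells at positions \<open>b - s b\<close> and
  \<open>b - s b + 1\<close> of row \<open>N - y\<close>.\<close>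

definition increasing_triple :: "(nat \<Rightarrow> nat) \<Rightarrow> nat \<Rightarrow> nat \<Rightarrow> bool" where
  "increasing_triple P b y \<longleftrightarrow>
     gamma (zero_rows P) (N - y) \<le> int b - int (s b) \<and> int b - int (s b) \<le> beta (N - y) \<and>
     (int b - int (s b) = gamma (zero_rows P) (N - y) \<or>
        tableau_of (zero_rows P) P (N - y, int b - int (s b)) < P b) \<and>
     (int b - int (s b) = beta (N - y) \<or>
        P b < tableau_of (zero_rows P) P (N - y, int b - int (s b) + 1))"

lemma finite_boxes_gamma: "finite (boxes N beta (gamma I))"
  by (rule finite_subset[of _ "box ` {1..N}"]) (use boxes_gamma_subset boxes_alpha_eq in auto)

lemma hw0_tableau_of_eq_sum:
  assumes P: "P \<in> labellings_bounded l m"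
  shows "hw0 N beta (gamma (zero_rows P)) (tableau_of (zero_rows P) P)
       = (\<Sum>b\<in>{i \<in> {1..N}. P i \<noteq> 0}. card {y. y < s b \<and> increasing_triple P b y})"
proof -
  let ?g = "gamma (zero_rows P)" and ?S = "tableau_of (zero_rows P) P"
  let ?Q = "\<lambda>r t j. (r, t) \<in> boxes N beta ?g \<and> r < j \<and> j \<le> N \<and> ?g j \<le> t \<and> t \<le> beta j \<and>
      (t = ?g j \<or> ?S (j, t) < ?S (r, t)) \<and> (t = beta j \<or> ?S (r, t) < ?S (j, t + 1))"
  have "hw0 N beta ?g ?S = (\<Sum>(r, t)\<in>boxes N beta ?g. card {j. ?Q r t j})"
    unfolding hw0_def by (rule card_triples_sum) (auto simp: finite_boxes_gamma)
  also have "\<dots> = (\<Sum>b\<in>{i \<in> {1..N}. P i \<noteq> 0}. card {j. ?Q (N - s b) (int b - int (s b)) j})"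
    using sum.reindex_bij_betw[OF bij_betw_box_nonzero[OF P], of "\<lambda>(r, t). card {j. ?Q r t j}"]
    by (simp add: box_def)
  also have "\<dots> = (\<Sum>b\<in>{i \<in> {1..N}. P i \<noteq> 0}. card {y. y < s b \<and> increasing_triple P b y})"
  proof (rule sum.cong[OF refl])
    fix b assume "b \<in> {i \<in> {1..N}. P i \<noteq> 0}"
    then have b: "1 \<le> b" "b \<le> N" "P b \<noteq> 0" by auto
    then have "box b \<in> boxes N beta ?g" using box_in_boxes_zero_rows_iff[OF P] by auto
    moreover have "?S (box b) = P b" using tableau_of_box[OF b(1,2)] calculation by simp
    ultimately have "{j. ?Q (N - s b) (int b - int (s b)) j}
        = {j. N - (s b) < j \<and> j \<le> N \<and> increasing_triple P b (N - j)}"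
      unfolding increasing_triple_def box_def by (auto simp: diff_diff_cancel)
    then show "card {j. ?Q (N - s b) (int b - int (s b)) j}
        = card {y. y < s b \<and> increasing_triple P b y}"
      using card_reflect[of "s b" N] s_less_N[OF b(1,2)] by simp
  qed
  finally show ?thesis .
qed

lemma hI_zero_rows_eq_sum:
  assumes P: "P \<in> labellings_bounded l m"
  shows "hI N (zero_rows P) alpha
       = (\<Sum>b\<in>{i \<in> {1..N}. P i = 0}.
            card {y. y < s b \<and> N - y \<notin> zero_rows P \<and> col_area y = Suc (col_area (s b))})"
proof -
  let ?I = "zero_rows P"
  let ?Q = "\<lambda>r j. r < j \<and> r \<in> ?I \<and> r \<in> {1..N} \<and> j \<in> {1..N} \<and> j \<notin> ?I \<and> alpha j = alpha r + 1"
  have "hI N ?I alpha = (\<Sum>r\<in>?I. card {j. ?Q r j})"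
    unfolding hI_def by (rule card_pairs_sum_fst) (auto simp: zero_rows_def)
  also have "\<dots> = (\<Sum>b\<in>{i \<in> {1..N}. P i = 0}. card {j. ?Q (N - s b) j})"
  proof -
    have "bij_betw (\<lambda>i. N - s i) {i \<in> {1..N}. P i = 0} ?I"
      unfolding bij_betw_def using inj_on_zero_row[OF P] by (simp add: zero_rows_def)
    then show ?thesis
      using sum.reindex_bij_betw[of "\<lambda>i. N - s i" _ _ "\<lambda>r. card {j. ?Q r j}"] by simp
  qed
  also have "\<dots> = (\<Sum>b\<in>{i \<in> {1..N}. P i = 0}.
      card {y. y < s b \<and> N - y \<notin> zero_rows P \<and> col_area y = Suc (col_area (s b))})"
  proof (rule sum.cong[OF refl])
    fix b assume "b \<in> {i \<in> {1..N}. P i = 0}"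
    then have b: "1 \<le> b" "b \<le> N" "N - s b \<in> ?I" unfolding zero_rows_def by auto
    have sb: "s b < N" using s_less_N b by auto
    then have "{j. ?Q (N - s b) j} = {j. N - s b < j \<and> j \<le> N \<and>
        N - (N - j) \<notin> ?I \<and> col_area (N - j) = Suc (col_area (s b))}"
      using b by (auto simp: alpha_def)
    then show "card {j. ?Q (N - s b) j}
        = card {y. y < s b \<and> N - y \<notin> zero_rows P \<and> col_area y = Suc (col_area (s b))}"
      using card_reflect[of "s b" N "\<lambda>y. N - y \<notin> ?I \<and> col_area y = Suc (col_area (s b))"] sb by simp
  qed
  finally show ?thesis .
qed

lemma tableau_of_row:
  assumes "y < N"
  shows "tableau_of I P (N - y, int k)
       = (if gamma I (N - y) < int k \<and> int k \<le> beta (N - y) then P (k + y) else 0)"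
  using assms unfolding tableau_of_def boxes_def by auto

lemma gamma_row: "y < N \<Longrightarrow> gamma I (N - y) = int (col_area y) + (if N - y \<in> I then 1 else 0)"
  unfolding gamma_def alpha_def epsI_def by auto

lemma beta_row: "y < N \<Longrightarrow> beta (N - y) = int (Suc (col_area (Suc y)))"
  unfolding beta_def by (simp add: Suc_diff_le)

lemma labels_in_column:
  assumes P: "P \<in> labellings_bounded l m" and y: "y < N"
  shows "col_area y < t \<Longrightarrow> t \<le> col_area (Suc y) \<Longrightarrow> P (t + y) < P (Suc (t + y))"
    and "col_area y < t \<Longrightarrow> t \<le> Suc (col_area (Suc y)) \<Longrightarrow>
           P (t + y) = 0 \<longleftrightarrow> N - y \<in> zero_rows P \<and> t = Suc (col_area y)"
    and "col_area y \<le> t \<Longrightarrow> t \<le> col_area (Suc y) \<Longrightarrow>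
           P (Suc (t + y)) = 0 \<longleftrightarrow> N - y \<in> zero_rows P \<and> t = col_area y"
    and "N - y \<in> zero_rows P \<Longrightarrow> col_area y \<le> col_area (Suc y)"
proof -
  note L = steps_left_col_area[OF y]
  show "P (t + y) < P (Suc (t + y))" if "col_area y < t" "t \<le> col_area (Suc y)"
  proof -
    have "steps_left y < t + y" "t + y \<le> steps_left (Suc y)" using that L by auto
    note a = column_member[OF this]
    have "steps_left y < Suc (t + y)" "Suc (t + y) \<le> steps_left (Suc y)" using that L by auto
    note a' = column_member[OF this]
    show ?thesis using labellings_boundedD(2)[OF P, of "t + y" "Suc (t + y)"] a a' by auto
  qed
  show "P (t + y) = 0 \<longleftrightarrow> N - y \<in> zero_rows P \<and> t = Suc (col_area y)"
    if "col_area y < t" "t \<le> Suc (col_area (Suc y))"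
  proof -
    have c: "steps_left y < t + y" "t + y \<le> steps_left (Suc y)" using that L by auto
    show ?thesis using zero_label_iff[OF P c] L by auto
  qed
  show "P (Suc (t + y)) = 0 \<longleftrightarrow> N - y \<in> zero_rows P \<and> t = col_area y"
    if "col_area y \<le> t" "t \<le> col_area (Suc y)"
  proof -
    have c: "steps_left y < Suc (t + y)" "Suc (t + y) \<le> steps_left (Suc y)" using that L by auto
    show ?thesis using zero_label_iff[OF P c] L by auto
  qed
  show "col_area y \<le> col_area (Suc y)" if "N - y \<in> zero_rows P"
    using zero_rows_iff[OF P y] that L by auto
qed

lemma card_dinv_partners_nonzero:
  assumes P: "P \<in> labellings_bounded l m" and b: "1 \<le> b" "b \<le> N" "P b \<noteq> 0"
  defines "t \<equiv> b - s b"
  shows "card (dinv_partners P b) = card {y. y < s b \<and> increasing_triple P b y}"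
  unfolding card_dinv_partners[OF b(1,2)] t_def[symmetric]
proof (rule card_add_eq_by_crossings[where f = col_area])
  have sb: "s b < N" "s b < b" using s_less_N s_lt b by auto
  show "col_area (s b) < t"
    using s_eq_iff[OF b(1,2), of "s b"] steps_left_col_area[OF sb(1)] sb unfolding t_def by auto
  show "col_area y \<le> Suc (col_area (Suc y))" if "y < s b" for y using col_area_step that sb by auto
  fix y assume "y < s b"
  then have y: "y < N" using sb by auto
  let ?z = "N - y \<in> zero_rows P"
  let ?g = "col_area y + (if ?z then 1 else 0)" and ?B = "Suc (col_area (Suc y))"
  note F = labels_in_column[OF P y]
  have "increasing_triple P b y \<longleftrightarrow> (?g \<le> t \<and> t \<le> ?B \<and>
      (t = ?g \<or> (if ?g < t \<and> t \<le> ?B then P (t + y) else 0) < P b) \<and>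
      (t = ?B \<or> P b < (if ?g < Suc t \<and> Suc t \<le> ?B then P (Suc (t + y)) else 0)))"
  proof -
    have "int b - int (s b) = int t" using sb unfolding t_def by auto
    moreover have "gamma (zero_rows P) (N - y) = int ?g" using gamma_row[OF y] by simp
    moreover have "int t + 1 = int (Suc t)" by simp
    ultimately show ?thesis
      by (simp only: increasing_triple_def beta_row[OF y] tableau_of_row[OF y]
          of_nat_less_iff of_nat_le_iff of_nat_eq_iff add_Suc)
  qed
  then show "(if col_area y < t \<and> t \<le> Suc (col_area (Suc y)) \<and> P (t + y) < P b then 1 else 0)
      + (if col_area y \<le> t \<and> t \<le> col_area (Suc y) \<and> P b < P (Suc (t + y)) then 1 else 0)
      + (if col_area y = t \<and> Suc (col_area (Suc y)) = t then 1 else 0)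
      = (if increasing_triple P b y then 1 else 0)
        + (if col_area y < t \<and> t \<le> col_area (Suc y) then 1 else (0::nat))"
    using column_count_nonzero_label[where z = ?z, OF col_area_step[OF y] _ F] b by simp
qed (rule col_area_0)

lemma card_dinv_partners_zero:
  assumes P: "P \<in> labellings_bounded l m" and b: "1 \<le> b" "b \<le> N" "P b = 0"
  defines "t \<equiv> b - s b"
  shows "card (dinv_partners P b)
       = card {y. y < s b \<and> N - y \<notin> zero_rows P \<and> col_area y = Suc (col_area (s b))}"
  unfolding card_dinv_partners[OF b(1,2)] t_def[symmetric]
proof (rule card_add_eq_by_crossings[where f = col_area])
  have sb: "s b < N" using s_less_N b by auto
  have t: "t = Suc (col_area (s b))"
    using zero_label_top[OF P b] steps_left_col_area[OF sb] unfolding t_def by auto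
  then show "col_area (s b) < t" by simp
  show "col_area y \<le> Suc (col_area (Suc y))" if "y < s b" for y using col_area_step that sb by auto
  fix y assume "y < s b"
  then have y: "y < N" using sb by auto
  note F = labels_in_column[OF P y]
  show "(if col_area y < t \<and> t \<le> Suc (col_area (Suc y)) \<and> P (t + y) < P b then 1 else 0)
      + (if col_area y \<le> t \<and> t \<le> col_area (Suc y) \<and> P b < P (Suc (t + y)) then 1 else 0)
      + (if col_area y = t \<and> Suc (col_area (Suc y)) = t then 1 else 0)
      = (if N - y \<notin> zero_rows P \<and> col_area y = Suc (col_area (s b)) then 1 else 0)
        + (if col_area y < t \<and> t \<le> col_area (Suc y) then 1 else (0::nat))"
    using column_count_zero_label[where z = "N - y \<in> zero_rows P", OF col_area_step[OF y] F(3,4)]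
    unfolding b(3) t[symmetric] by simp
qed (rule col_area_0)

lemma path_dinv_eq:
  assumes P: "P \<in> labellings_bounded l m"
  shows "path_dinv P
       = hI N (zero_rows P) alpha + hw0 N beta (gamma (zero_rows P)) (tableau_of (zero_rows P) P)"
proof -
  let ?NZ = "{i \<in> {1..N}. P i \<noteq> 0}" and ?Z = "{i \<in> {1..N}. P i = 0}"
  have "path_dinv P = (\<Sum>b\<in>?NZ \<union> ?Z. card (dinv_partners P b))"
    unfolding path_dinv_eq_sum by (rule sum.cong) auto
  also have "\<dots> = (\<Sum>b\<in>?NZ. card (dinv_partners P b)) + (\<Sum>b\<in>?Z. card (dinv_partners P b))"
    by (rule sum.union_disjoint) auto
  also have "(\<Sum>b\<in>?NZ. card (dinv_partners P b))
      = hw0 N beta (gamma (zero_rows P)) (tableau_of (zero_rows P) P)"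
    unfolding hw0_tableau_of_eq_sum[OF P]
    by (rule sum.cong) (auto simp: card_dinv_partners_nonzero[OF P])
  also have "(\<Sum>b\<in>?Z. card (dinv_partners P b)) = hI N (zero_rows P) alpha"
    unfolding hI_zero_rows_eq_sum[OF P]
    by (rule sum.cong) (auto simp: card_dinv_partners_zero[OF P])
  finally show ?thesis by simp
qed

lemma finite_labellings_bounded: "finite (labellings_bounded l m)"
proof (rule finite_subset)
  show "labellings_bounded l m \<subseteq> {P. \<forall>i. (i \<in> {1..N} \<longrightarrow> P i \<in> {0..m}) \<and> (i \<notin> {1..N} \<longrightarrow> P i = 0)}"
  proof (intro subsetI CollectI allI conjI impI)
    fix P i assume P: "P \<in> labellings_bounded l m"
    show "P i \<in> {0..m}" using labellings_boundedD(5)[OF P] by simp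
    show "i \<notin> {1..N} \<Longrightarrow> P i = 0" using labellings_boundedD(1)[OF P, of i] by auto
  qed
  show "finite {P. \<forall>i. (i \<in> {1..N} \<longrightarrow> P i \<in> {0..m}) \<and> (i \<notin> {1..N} \<longrightarrow> P i = (0::nat))}"
    by (rule finite_set_of_finite_funs) auto
qed

lemma bij_betw_tableau_of:
  assumes I: "I \<subseteq> {1..N - 1}" "card I = l" and valid: "\<And>j. j \<in> I \<Longrightarrow> gamma I j \<le> beta j"
  shows "bij_betw (tableau_of I) {P \<in> labellings_bounded l m. zero_rows P = I}
           (tableaux m N beta (gamma I))"
proof (rule bij_betw_byWitness[where f' = labelling_of]; intro ballI subsetI)
  fix P assume "P \<in> {P \<in> labellings_bounded l m. zero_rows P = I}"
  then have P: "P \<in> labellings_bounded l m" and PI: "zero_rows P = I" by auto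
  show "labelling_of (tableau_of I P) = P" using labelling_of_tableau_of[OF P] PI by simp
next
  fix S assume S: "S \<in> tableaux m N beta (gamma I)"
  show "tableau_of I (labelling_of S) = S" using tableau_of_labelling_of[OF S] .
next
  fix S assume "S \<in> tableau_of I ` {P \<in> labellings_bounded l m. zero_rows P = I}"
  then obtain P where P: "P \<in> labellings_bounded l m" "zero_rows P = I" and "S = tableau_of I P"
    by blast
  then show "S \<in> tableaux m N beta (gamma I)" using tableau_of_in_tableaux[OF P(1)] by simp
next
  fix P assume "P \<in> labelling_of ` tableaux m N beta (gamma I)"
  then obtain S where S: "S \<in> tableaux m N beta (gamma I)" and "P = labelling_of S" by blast
  then show "P \<in> {P \<in> labellings_bounded l m. zero_rows P = I}"
    using labelling_of_in_labellings[OF S I valid] zero_rows_labelling_of[OF S I(1) valid] by simp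
qed

lemma sum_labellings_with_zero_rows:
  fixes q :: "'a::comm_ring_1" and x :: "nat \<Rightarrow> 'a"
  assumes I: "I \<subseteq> {1..N - 1}" "card I = l"
  shows "(\<Sum>P \<in> {P \<in> labellings_bounded l m. zero_rows P = I}. q ^ path_dinv P * wtplus x N P)
       = q ^ hI N I alpha * Nshape m N beta (gamma I) q x"
proof (cases "\<exists>j\<in>{1..N}. beta j < gamma I j")
  case True
  then have empty: "{P \<in> labellings_bounded l m. zero_rows P = I} = {}"
    using gamma_zero_rows_le_beta by (auto simp: not_le[symmetric])
  show ?thesis unfolding empty using True by (simp add: Nshape_def)
next
  case False
  then have valid: "\<And>j. j \<in> I \<Longrightarrow> gamma I j \<le> beta j" using I by (force simp: not_less)
  let ?w = "\<lambda>S. q ^ hw0 N beta (gamma I) S * (\<Prod>b\<in>boxes N beta (gamma I). x (S b))"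
  have "(\<Sum>P \<in> {P \<in> labellings_bounded l m. zero_rows P = I}. q ^ path_dinv P * wtplus x N P)
      = (\<Sum>P \<in> {P \<in> labellings_bounded l m. zero_rows P = I}.
           q ^ hI N I alpha * ?w (tableau_of I P))"
    by (rule sum.cong) (auto simp: path_dinv_eq prod_tableau_of_eq_wtplus power_add mult.assoc)
  also have "\<dots> = (\<Sum>S \<in> tableaux m N beta (gamma I). q ^ hI N I alpha * ?w S)"
    by (rule sum.reindex_bij_betw[OF bij_betw_tableau_of[OF I valid]])
  also have "\<dots> = q ^ hI N I alpha * Nshape m N beta (gamma I) q x"
    using False by (simp add: Nshape_def sum_distrib_left)
  finally show ?thesis .
qed

theorem sum_labellings_eq_sum_shapes:
  fixes q :: "'a::comm_ring_1" and x :: "nat \<Rightarrow> 'a"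
  shows "(\<Sum>P\<in>labellings_bounded l m. q ^ path_dinv P * wtplus x N P)
       = (\<Sum>I\<in>{I. I \<subseteq> {1..N - 1} \<and> card I = l}. q ^ hI N I alpha * Nshape m N beta (gamma I) q x)"
proof -
  have "finite {I. I \<subseteq> {1..N - 1} \<and> card I = l}" by (rule finite_subset[of _ "Pow {1..N - 1}"]) auto
  moreover have "zero_rows ` labellings_bounded l m \<subseteq> {I. I \<subseteq> {1..N - 1} \<and> card I = l}"
    using zero_rows_subset card_zero_rows by auto
  ultimately have "(\<Sum>P\<in>labellings_bounded l m. q ^ path_dinv P * wtplus x N P)
      = (\<Sum>I\<in>{I. I \<subseteq> {1..N - 1} \<and> card I = l}.
           \<Sum>P \<in> {P \<in> labellings_bounded l m. zero_rows P = I}. q ^ path_dinv P * wtplus x N P)"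
    by (rule sum.group[OF finite_labellings_bounded, symmetric])
  also have "\<dots> = (\<Sum>I\<in>{I. I \<subseteq> {1..N - 1} \<and> card I = l}.
                       q ^ hI N I alpha * Nshape m N beta (gamma I) q x)"
    by (rule sum.cong[OF refl], rule sum_labellings_with_zero_rows) auto
  finally show ?thesis .
qed

end

sublocale dyck_path \<subseteq> dyck_columns N "sx lam"
  by unfold_locales (use sx_less sx_mono in auto)

context dyck_path
begin

lemma hgt_lam_eq: "hgt N lam x = N - steps_left (Suc x)"
proof -
  have "{i \<in> {1..N}. sx lam i \<le> x} = {i \<in> {1..N}. sx lam i < Suc x}" by auto
  then show ?thesis using hgt_lam unfolding steps_left_def by simp
qed

lemma rowr_eq_row_area:
  assumes i: "1 \<le> i" "i \<le> N"
  shows "rowr N lam i = row_area i"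
proof -
  have "{x. between N lam x (N - i)} = {sx lam i..<i - 1}"
  proof (rule set_eqI)
    fix x
    have "hgt N lam x \<le> N - i \<longleftrightarrow> sx lam i \<le> x"
      using hgt_lam_eq[of x] steps_left_le[of "Suc x"] s_less_iff[OF i, of "Suc x"] i by auto
    moreover have "x < N \<and> N - i + 1 \<le> hgt N (staircase N) x \<longleftrightarrow> x < i - 1"
      using hgt_staircase[of N x] i by auto
    ultimately show "x \<in> {x. between N lam x (N - i)} \<longleftrightarrow> x \<in> {sx lam i..<i - 1}"
      unfolding between_def using i by auto
  qed
  then show ?thesis unfolding rowr_def row_area_def by simp
qed

lemma colc_eq_col_area:
  assumes j: "1 \<le> j" "j \<le> N"
  shows "colc N lam j = col_area (Suc N - j)"
proof -
  let ?z = "Suc N - j"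
  have z: "?z \<le> N" "Suc (N - j) = ?z" "j - 1 < N" using j by auto
  have L: "?z \<le> steps_left ?z" "steps_left ?z \<le> N"
    using steps_left_ge[OF z(1)] steps_left_le by auto
  have "{y. between N lam (N - j) y} = {N - steps_left ?z..<j - 1}"
    using hgt_lam_eq[of "N - j"] hgt_staircase[of N "N - j"] z j L
    unfolding between_def by (auto intro: less_trans)
  then have "colc N lam j = j - 1 - (N - steps_left ?z)" unfolding colc_def by simp
  also have "\<dots> = col_area ?z" unfolding col_area_def using L j by auto
  finally show ?thesis .
qed

lemma alpha_of_eq: "j \<in> {1..N} \<Longrightarrow> alpha_of N lam j = alpha j"
  using colc_eq_col_area[of "Suc j"] col_area_0 by (auto simp: alpha_of_def alpha_def)

lemma beta_of_eq: "j \<in> {1..N} \<Longrightarrow> beta_of N lam j = beta j"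
  using colc_eq_col_area[of j] steps_left_N by (auto simp: beta_of_def beta_def col_area_def)

lemma labellings_eq: "{P \<in> labellings N l lam. \<forall>i. P i \<le> m} = labellings_bounded l m"
  unfolding labellings_def labellings_bounded_def by auto

lemma dinv_eq_path_dinv: "dinv N lam P = path_dinv P"
  unfolding dinv_def path_dinv_def
  by (rule arg_cong[where f = card]) (auto simp: rowr_eq_row_area)

lemma hI_alpha_of: "hI N I (alpha_of N lam) = hI N I alpha"
  by (rule hI_cong) (rule alpha_of_eq)

lemma Nshape_beta_of_alpha_of:
  "Nshape m N (beta_of N lam) (\<lambda>j. alpha_of N lam j + epsI I j) q x = Nshape m N beta (gamma I) q x"
  by (rule Nshape_cong) (simp add: alpha_of_eq beta_of_eq gamma_def)

end

theorem lemma5p3p2: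
  fixes N l m :: nat and lam :: "bool list" and q :: "'a::comm_ring_1" and x :: "nat \<Rightarrow> 'a"
  assumes "l < N" and "lam \<in> dyck_paths N"
  shows "(\<Sum>P \<in> {P \<in> labellings N l lam. \<forall>i. P i \<le> m}. q ^ dinv N lam P * wtplus x N P) =
         (\<Sum>I \<in> {I. I \<subseteq> {1..N - 1} \<and> card I = l}.
            q ^ hI N I (alpha_of N lam) *
            Nshape m N (beta_of N lam) (\<lambda>j. alpha_of N lam j + epsI I j) q x)"
proof -
  interpret dyck_path N lam by unfold_locales (fact assms(2))
  show ?thesis
    unfolding labellings_eq dinv_eq_path_dinv hI_alpha_of Nshape_beta_of_alpha_of
    by (rule sum_labellings_eq_sum_shapes)
qed

end
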